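(* For every $E\subseteq\mathbb{F}_q^2$, $$\sum_{t\in\mathbb{F}_q^6}\nu_B(t)^2\le \Psi(2,2).$$
   Context: Standing assumptions: $q=p^n$ with $p$ a prime, $p\equiv 3\pmod 4$, $n$ odd. For $x,y\in\mathbb{F}_q^2$, $\|x-y\|=(x_1-y_1)^2+(x_2-y_2)^2$. $O(\mathbb{F}_q^2)$ is the group of $2\times2$ matrices $\theta$ over $\mathbb{F}_q$ with $\theta^T\theta=I$. $\lambda_\theta(w)=|\{(u,v)\in E^2: u-\theta v=w\}|$. For $t\in\mathbb{F}_q^6$, $\nu_B(t)$ is the number of $(x,y,z,u,v)\in E^5$ with $(\|x-y\|,\|x-z\|,\|y-z\|,\|x-u\|,\|x-v\|,\|u-v\|)=t$. For positive integers $a,b$, $$\Psi(a,b)=\sum_{x,x'\in\mathbb{F}_q^2}\ \sum_{\theta,\phi\in O(\mathbb{F}_q^2)}\lambda_\theta(x-\theta x')^a\,\lambda_\phi(x-\phi x')^b.$$ *)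

theory Defs
  imports "HOL-Analysis.Analysis"
begin

definition sqdist :: "'a::field ^ 2 \<Rightarrow> 'a ^ 2 \<Rightarrow> 'a" where
  "sqdist x y = (x$1 - y$1)^2 + (x$2 - y$2)^2"

definition orth_group :: "('a::field ^ 2 ^ 2) set" where
  "orth_group = {\<theta>. transpose \<theta> ** \<theta> = mat 1}"

definition lam :: "('a::field ^ 2) set \<Rightarrow> 'a ^ 2 ^ 2 \<Rightarrow> 'a ^ 2 \<Rightarrow> nat" where
  "lam E \<theta> w = card {(u, v). u \<in> E \<and> v \<in> E \<and> u - \<theta> *v v = w}"

definition nuB :: "('a::field ^ 2) set \<Rightarrow> 'a ^ 6 \<Rightarrow> nat" where
  "nuB E t = card {(x, y, z, u, v). x \<in> E \<and> y \<in> E \<and> z \<in> E \<and> u \<in> E \<and> v \<in> E \<and>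
      sqdist x y = t$1 \<and> sqdist x z = t$2 \<and> sqdist y z = t$3 \<and>
      sqdist x u = t$4 \<and> sqdist x v = t$5 \<and> sqdist u v = t$6}"

definition Psi :: "('a::{finite,field} ^ 2) set \<Rightarrow> nat \<Rightarrow> nat \<Rightarrow> nat" where
  "Psi E a b = (\<Sum>x\<in>UNIV. \<Sum>x'\<in>UNIV. \<Sum>\<theta>\<in>orth_group. \<Sum>\<phi>\<in>orth_group.
      lam E \<theta> (x - \<theta> *v x') ^ a * lam E \<phi> (x - \<phi> *v x') ^ b)"

end

theory Submission
  imports Defs
begin

text \<open>
  Since \<open>q \<equiv> 3 (mod 4)\<close>, \<open>-1\<close> is not a square in \<open>\<FF>\<^sub>q\<close>, so the form \<open>a\<^sup>2 + b\<^sup>2\<close> is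
  anisotropic. Then two triangles \<open>x y z\<close> and \<open>x' y' z'\<close> with equal side lengths are
  congruent: equal Gram matrices of the edge vectors give an orthogonal \<open>\<theta>\<close> with
  \<open>\<theta>(y' - x') = y - x\<close> and \<open>\<theta>(z' - x') = z - x\<close> (the degenerate, rank-deficient case
  is handled separately, again by anisotropy). The left-hand side counts pairs of
  5-point configurations \<open>(x,y,z,u,v)\<close>, \<open>(x',y',z',u',v')\<close> in \<open>E\<close> with the same distance
  profile. For such a pair choose \<open>\<theta>\<close> for the triangles at \<open>x\<close>, \<open>y\<close>, \<open>z\<close> and \<open>\<phi>\<close> for those
  at \<open>x\<close>, \<open>u\<close>, \<open>v\<close>; then \<open>(y,y')\<close>, \<open>(z,z')\<close> are counted by \<open>\<lambda>\<^sub>\<theta>(x - \<theta>x')\<close> and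
  \<open>(u,u')\<close>, \<open>(v,v')\<close> by \<open>\<lambda>\<^sub>\<phi>(x - \<phi>x')\<close>. Summing over \<open>x, x', \<theta>, \<phi>\<close> gives \<open>\<Psi>(2,2)\<close>.
\<close>

lemma of_nat_CARD_eq_0: "of_nat CARD('a::{finite,comm_ring_1}) = (0::'a)"
proof -
  have "(\<Sum>x\<in>UNIV. x + 1) = (\<Sum>x\<in>(UNIV::'a set). x)"
    by (rule sum.reindex_bij_witness[where i="\<lambda>x. x - 1" and j="\<lambda>x. x + 1"]) auto
  then show ?thesis by (simp add: sum.distrib)
qed

lemma power_CARD_minus_one_eq_1:
  fixes x :: "'a::{finite,field}"
  assumes "x \<noteq> 0"
  shows "x ^ (CARD('a) - 1) = 1"
proof -
  let ?U = "UNIV - {0::'a}"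
  have "(\<Prod>y\<in>?U. x * y) = (\<Prod>y\<in>?U. y)"
    by (rule prod.reindex_bij_witness[where i="\<lambda>y. y / x" and j="\<lambda>y. x * y"]) (use assms in auto)
  then have "x ^ card ?U = 1"
    by (simp add: prod.distrib)
  then show ?thesis by (simp add: card_Diff_singleton)
qed

lemma power_mod_4_eq_3:
  fixes p :: nat
  assumes "p mod 4 = 3" and "odd n"
  shows "p ^ n mod 4 = 3"
proof -
  obtain m where n: "n = 2 * m + 1" using \<open>odd n\<close> oddE by blast
  have "(9::nat) ^ m mod 4 = 1"
    using power_mod[of "9::nat" 4 m] by simp
  then have "(3::nat) ^ (2 * m + 1) mod 4 = 3"
    using mod_mult_right_eq[of "3::nat" "9 ^ m" 4] by (simp add: power_mult)
  then show ?thesis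
    using power_mod[of p 4 n] assms(1) by (simp add: n)
qed

lemma minus_one_not_square:
  fixes r :: "'a::{finite,field}"
  assumes "CARD('a) mod 4 = 3"
  shows "r^2 \<noteq> -1"
proof
  assume r: "r^2 = -1"
  define m where "m = CARD('a) div 4"
  have card: "CARD('a) = 2 * (2 * m + 1) + 1"
    using assms unfolding m_def by presburger
  have "r \<noteq> 0" using r by auto
  then have "r ^ (2 * (2 * m + 1)) = 1"
    using power_CARD_minus_one_eq_1[of r] by (metis card add_diff_cancel_right')
  then have "(r^2) ^ (2 * m + 1) = 1"
    by (simp only: power_mult)
  then have "(2::'a) = 0"
    by (simp add: r eq_neg_iff_add_eq_0)
  moreover have "(of_nat CARD('a)::'a) = 2 * of_nat (2 * m + 1) + 1"
    by (simp only: card of_nat_add of_nat_mult of_nat_numeral of_nat_1)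
  ultimately have "(of_nat CARD('a)::'a) = 1"
    by simp
  then show False by (simp add: of_nat_CARD_eq_0)
qed

definition dot2 :: "'a::comm_ring_1 ^ 2 \<Rightarrow> 'a ^ 2 \<Rightarrow> 'a" where
  "dot2 u v = u$1 * v$1 + u$2 * v$2"

definition cols2 :: "'a ^ 2 \<Rightarrow> 'a ^ 2 \<Rightarrow> 'a ^ 2 ^ 2" where
  "cols2 c d = (\<chi> i j. if j = 1 then c$i else d$i)"

definition perp :: "'a::ring_1 ^ 2 \<Rightarrow> 'a ^ 2" where
  "perp v = vector [- v$2, v$1]"

lemma sqdist_eq_dot2: "sqdist x y = dot2 (y - x) (y - x)"
  by (simp add: sqdist_def dot2_def power2_eq_square algebra_simps)

lemma dot2_zero [simp]: "dot2 0 v = 0" "dot2 v 0 = 0"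
  by (simp_all add: dot2_def)

lemma dot2_commute: "dot2 u v = dot2 v u"
  by (simp add: dot2_def mult.commute)

lemma dot2_diff: "dot2 (u - v) (u - v) = dot2 u u + dot2 v v - 2 * dot2 u v"
  by (simp add: dot2_def algebra_simps)

lemma dot2_diff_smult:
  "dot2 (u - k *s v) (u - k *s v) = dot2 u u - 2 * k * dot2 v u + k^2 * dot2 v v"
  by (simp add: dot2_def power2_eq_square algebra_simps)

lemma dot2_perp [simp]: "dot2 (perp v) (perp v) = dot2 v v" "dot2 v (perp v) = 0"
  by (simp_all add: dot2_def perp_def algebra_simps)

lemma cols2_eq_iff: "cols2 a b = cols2 c d \<longleftrightarrow> a = c \<and> b = d"
  by (auto simp: cols2_def vec_eq_iff forall_2)

lemma matrix_mult_cols2: "M ** cols2 c d = cols2 (M *v c) (M *v d)"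
  by (simp add: cols2_def matrix_matrix_mult_def matrix_vector_mult_def vec_eq_iff forall_2)

lemma det_cols2: "det (cols2 c d) = c$1 * d$2 - c$2 * d$1"
  by (simp add: det_2 cols2_def)

lemma gram_cols2_eq:
  assumes "dot2 a a = dot2 c c" and "dot2 a b = dot2 c d" and "dot2 b b = dot2 d d"
  shows "transpose (cols2 a b) ** cols2 a b = transpose (cols2 c d) ** cols2 c d"
  using assms dot2_commute[of b a] dot2_commute[of d c]
  by (simp add: cols2_def transpose_def matrix_matrix_mult_def vec_eq_iff forall_2 sum_2 dot2_def)

lemma matrix_vector_mult_smult:
  fixes M :: "'a::comm_semiring_1 ^ 'n ^ 'm"
  shows "M *v (k *s v) = k *s (M *v v)"
  by (simp add: matrix_vector_mult_def vec_eq_iff sum_distrib_left mult.left_commute)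

lemma ex_orthogonal_if_gram_eq:
  fixes A C :: "'a::field ^ 'n ^ 'n"
  assumes gram: "transpose A ** A = transpose C ** C" and "invertible C"
  shows "\<exists>\<theta>. transpose \<theta> ** \<theta> = mat 1 \<and> \<theta> ** C = A"
proof -
  obtain C' where C': "C ** C' = mat 1" "C' ** C = mat 1"
    using \<open>invertible C\<close> by (auto simp: invertible_def)
  define \<theta> where "\<theta> = A ** C'"
  have "transpose \<theta> ** \<theta> = transpose C' ** (transpose A ** A) ** C'"
    by (simp add: \<theta>_def matrix_transpose_mul matrix_mul_assoc)
  also have "\<dots> = transpose (C ** C') ** (C ** C')"
    by (simp add: gram matrix_transpose_mul matrix_mul_assoc)
  finally have "transpose \<theta> ** \<theta> = mat 1"
    by (simp add: C'(1) transpose_mat)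
  moreover have "\<theta> ** C = A"
    by (simp add: \<theta>_def C'(2) flip: matrix_mul_assoc)
  ultimately show ?thesis by blast
qed

lemma ex_orth_group_if_gram_cols2_eq:
  assumes "transpose (cols2 a b) ** cols2 a b = transpose (cols2 c d) ** cols2 c d"
    and "det (cols2 c d) \<noteq> (0::'a::field)"
  shows "\<exists>\<theta>\<in>orth_group. \<theta> *v c = a \<and> \<theta> *v d = b"
  using ex_orthogonal_if_gram_eq[OF assms(1)] assms(2)
  by (auto simp: invertible_det_nz orth_group_def matrix_mult_cols2 cols2_eq_iff)

definition lam_set :: "('a::field ^ 2) set \<Rightarrow> 'a ^ 2 ^ 2 \<Rightarrow> 'a ^ 2 \<Rightarrow> (('a ^ 2) \<times> ('a ^ 2)) set" where
  "lam_set E \<theta> w = {(u, v). u \<in> E \<and> v \<in> E \<and> u - \<theta> *v v = w}"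

definition nuB_set :: "('a::field ^ 2) set \<Rightarrow> 'a ^ 6 \<Rightarrow> (('a ^ 2) \<times> ('a ^ 2) \<times> ('a ^ 2) \<times> ('a ^ 2) \<times> ('a ^ 2)) set" where
  "nuB_set E t = {(x, y, z, u, v). x \<in> E \<and> y \<in> E \<and> z \<in> E \<and> u \<in> E \<and> v \<in> E \<and>
      sqdist x y = t$1 \<and> sqdist x z = t$2 \<and> sqdist y z = t$3 \<and>
      sqdist x u = t$4 \<and> sqdist x v = t$5 \<and> sqdist u v = t$6}"

lemma lam_eq_card_lam_set: "lam E \<theta> w = card (lam_set E \<theta> w)"
  by (simp add: lam_def lam_set_def)

lemma nuB_eq_card_nuB_set: "nuB E t = card (nuB_set E t)"
  by (simp add: nuB_def nuB_set_def)

context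
  assumes minus_one_not_square: "\<And>r::'a::field. r^2 \<noteq> -1"
begin

lemma two_neq_zero: "(2::'a) \<noteq> 0"
proof
  assume "(2::'a) = 0"
  then have "(1::'a)^2 = -1"
    by (simp add: eq_neg_iff_add_eq_0)
  with minus_one_not_square show False by blast
qed

lemma sum_squares_eq_0_iff: "(x::'a)^2 + y^2 = 0 \<longleftrightarrow> x = 0 \<and> y = 0"
proof (cases "y = 0")
  case False
  show ?thesis
  proof
    assume "x^2 + y^2 = 0"
    then have "(x / y)^2 = -1"
      using False by (simp add: power_divide field_simps eq_neg_iff_add_eq_0)
    with minus_one_not_square show "x = 0 \<and> y = 0" by blast
  qed (use False in simp)
qed simp

lemma dot2_self_eq_0_iff: "dot2 v v = (0::'a) \<longleftrightarrow> v = 0"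
  using sum_squares_eq_0_iff[of "v$1" "v$2"]
  by (simp add: dot2_def power2_eq_square vec_eq_iff forall_2)

lemma orth_group_map_vector:
  fixes a c :: "'a ^ 2"
  assumes "dot2 a a = dot2 c c"
  shows "\<exists>\<theta>\<in>orth_group. \<theta> *v c = a"
proof (cases "c = 0")
  case True
  then have "a = 0" using assms dot2_self_eq_0_iff[of a] by (simp add: dot2_def)
  moreover have "mat 1 \<in> orth_group" by (simp add: orth_group_def transpose_mat)
  ultimately show ?thesis using True by (intro bexI[of _ "mat 1"]) simp_all
next
  case False
  have "det (cols2 c (perp c)) = dot2 c c"
    by (simp add: det_cols2 perp_def dot2_def)
  then have "det (cols2 c (perp c)) \<noteq> 0" using False dot2_self_eq_0_iff by simp
  moreover have "transpose (cols2 a (perp a)) ** cols2 a (perp a) =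
      transpose (cols2 c (perp c)) ** cols2 c (perp c)"
    by (rule gram_cols2_eq) (simp_all add: assms)
  ultimately show ?thesis using ex_orth_group_if_gram_cols2_eq by blast
qed

lemma orth_group_map_pair:
  fixes a b c d :: "'a ^ 2"
  assumes aa: "dot2 a a = dot2 c c" and ab: "dot2 a b = dot2 c d" and bb: "dot2 b b = dot2 d d"
  shows "\<exists>\<theta>\<in>orth_group. \<theta> *v c = a \<and> \<theta> *v d = b"
proof (cases "det (cols2 c d) = 0")
  case False
  then show ?thesis using ex_orth_group_if_gram_cols2_eq gram_cols2_eq[OF assms] by blast
next
  case singular: True
  show ?thesis
  proof (cases "c = 0")
    case True
    then have "a = 0" using aa dot2_self_eq_0_iff[of a] by simp
    then show ?thesis using True orth_group_map_vector[OF bb] by simp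
  next
    case False
    \<comment> \<open>\<open>d\<close> is a multiple of \<open>c\<close>, and anisotropy forces \<open>b\<close> to be the same multiple of \<open>a\<close>\<close>
    define k where "k = dot2 c d / dot2 c c"
    have cc: "dot2 c c \<noteq> 0" using False dot2_self_eq_0_iff by simp
    have cross: "c$1 * d$2 = c$2 * d$1"
      using singular by (simp add: det_cols2)
    have "dot2 c c * d$1 - dot2 c d * c$1 = c$2 * (c$2 * d$1 - c$1 * d$2)"
      "dot2 c c * d$2 - dot2 c d * c$2 = c$1 * (c$1 * d$2 - c$2 * d$1)"
      by (simp_all add: dot2_def algebra_simps)
    then have "dot2 c c * d$1 = dot2 c d * c$1" "dot2 c c * d$2 = dot2 c d * c$2"
      by (simp_all add: cross)
    then have d: "d = k *s c"
      using cc by (simp add: k_def vec_eq_iff forall_2 field_simps)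
    have "dot2 (b - k *s a) (b - k *s a) = dot2 (d - k *s c) (d - k *s c)"
      by (simp only: dot2_diff_smult aa bb ab)
    then have b: "b = k *s a"
      using d dot2_self_eq_0_iff[of "b - k *s a"] by simp
    obtain \<theta> where "\<theta> \<in> orth_group" "\<theta> *v c = a" using orth_group_map_vector[OF aa] by blast
    then show ?thesis using d b by (auto simp: matrix_vector_mult_smult)
  qed
qed

lemma sqdist_congruent_triangles:
  fixes x y z x' y' z' :: "'a ^ 2"
  assumes "sqdist x y = sqdist x' y'" and "sqdist x z = sqdist x' z'" and "sqdist y z = sqdist y' z'"
  shows "\<exists>\<theta>\<in>orth_group. \<theta> *v (y' - x') = y - x \<and> \<theta> *v (z' - x') = z - x"
proof (rule orth_group_map_pair)
  show aa: "dot2 (y - x) (y - x) = dot2 (y' - x') (y' - x')"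
    using assms(1) by (simp add: sqdist_eq_dot2)
  show bb: "dot2 (z - x) (z - x) = dot2 (z' - x') (z' - x')"
    using assms(2) by (simp add: sqdist_eq_dot2)
  have "dot2 ((z - x) - (y - x)) ((z - x) - (y - x)) =
      dot2 ((z' - x') - (y' - x')) ((z' - x') - (y' - x'))"
    using assms(3) by (simp add: sqdist_eq_dot2)
  then have "2 * dot2 (z - x) (y - x) = 2 * dot2 (z' - x') (y' - x')"
    unfolding dot2_diff[of "z - x" "y - x"] dot2_diff[of "z' - x'" "y' - x'"] aa bb by simp
  then show "dot2 (y - x) (z - x) = dot2 (y' - x') (z' - x')"
    using two_neq_zero by (simp add: dot2_commute)
qed

lemma nuB_set_pair_in_lam_sets:
  fixes x y z u v x' y' z' u' v' :: "'a ^ 2"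
  assumes "(x, y, z, u, v) \<in> nuB_set E t" and "(x', y', z', u', v') \<in> nuB_set E t"
  shows "\<exists>\<theta>\<in>orth_group. \<exists>\<phi>\<in>orth_group.
    (y, y') \<in> lam_set E \<theta> (x - \<theta> *v x') \<and> (z, z') \<in> lam_set E \<theta> (x - \<theta> *v x') \<and>
    (u, u') \<in> lam_set E \<phi> (x - \<phi> *v x') \<and> (v, v') \<in> lam_set E \<phi> (x - \<phi> *v x')"
proof -
  have E: "y \<in> E" "z \<in> E" "u \<in> E" "v \<in> E" "y' \<in> E" "z' \<in> E" "u' \<in> E" "v' \<in> E"
    and d: "sqdist x y = sqdist x' y'" "sqdist x z = sqdist x' z'" "sqdist y z = sqdist y' z'"
      "sqdist x u = sqdist x' u'" "sqdist x v = sqdist x' v'" "sqdist u v = sqdist u' v'"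
    using assms by (simp_all add: nuB_set_def)
  have in_lam_set: "(w, w') \<in> lam_set E M (x - M *v x')"
    if "M *v (w' - x') = w - x" "w \<in> E" "w' \<in> E" for M :: "'a ^ 2 ^ 2" and w w'
    using that by (simp add: lam_set_def matrix_vector_mult_diff_distrib algebra_simps)
  obtain \<theta> where "\<theta> \<in> orth_group" "\<theta> *v (y' - x') = y - x" "\<theta> *v (z' - x') = z - x"
    using sqdist_congruent_triangles[OF d(1-3)] by blast
  moreover obtain \<phi> where "\<phi> \<in> orth_group" "\<phi> *v (u' - x') = u - x" "\<phi> *v (v' - x') = v - x"
    using sqdist_congruent_triangles[OF d(4-6)] by blast
  ultimately show ?thesis using E in_lam_set by blast
qed

end

lemma exhaust_6:
  fixes i :: 6
  shows "i = 1 \<or> i = 2 \<or> i = 3 \<or> i = 4 \<or> i = 5 \<or> i = 6"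
proof (induct i)
  case (of_int z)
  then have "z = 0 \<or> z = 1 \<or> z = 2 \<or> z = 3 \<or> z = 4 \<or> z = 5" by fastforce
  then show ?case by auto
qed

lemma forall_6: "(\<forall>i::6. P i) \<longleftrightarrow> P 1 \<and> P 2 \<and> P 3 \<and> P 4 \<and> P 5 \<and> P 6"
  by (metis exhaust_6)

lemma sum_card_sq_eq_card_Union:
  assumes "finite I" and "\<And>i. i \<in> I \<Longrightarrow> finite (A i)" and "disjoint_family_on A I"
  shows "(\<Sum>i\<in>I. card (A i) ^ 2) = card (\<Union>i\<in>I. A i \<times> A i)"
proof -
  have "disjoint_family_on (\<lambda>i. A i \<times> A i) I"
    using assms(3) by (auto simp: disjoint_family_on_def)
  then show ?thesis
    using assms(1,2) by (simp add: card_UN_disjoint' card_cartesian_product power2_eq_square)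
qed

lemma sum_nuB_sq_eq_card:
  fixes E :: "('a::{finite,field} ^ 2) set"
  shows "(\<Sum>t\<in>UNIV. (nuB E t)^2) = card (\<Union>t. nuB_set E t \<times> nuB_set E t)"
proof -
  have "disjoint_family_on (nuB_set E) UNIV"
    by (auto simp: disjoint_family_on_def nuB_set_def vec_eq_iff forall_6)
  then show ?thesis
    by (simp add: sum_card_sq_eq_card_Union nuB_eq_card_nuB_set)
qed

lemma sum_nuB_sq_le_Psi:
  fixes E :: "('a::{finite,field} ^ 2) set"
  assumes minus_one_not_square: "\<And>r::'a. r^2 \<noteq> -1"
  shows "(\<Sum>t\<in>(UNIV :: ('a ^ 6) set). (nuB E t)^2) \<le> Psi E 2 2"
proof -
  define L where "L x x' \<theta> = lam_set E \<theta> (x - \<theta> *v x')" for x x' :: "'a ^ 2" and \<theta>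
  define K :: "(('a ^ 2) \<times> ('a ^ 2) \<times> ('a ^ 2 ^ 2) \<times> ('a ^ 2 ^ 2)) set"
    where "K = UNIV \<times> UNIV \<times> orth_group \<times> orth_group"
  define B where "B = (\<lambda>(x, x', \<theta>, \<phi>).
      (\<lambda>((y, y'), (z, z'), (u, u'), (v, v')). ((x, y, z, u, v), (x', y', z', u', v'))) `
        (L x x' \<theta> \<times> L x x' \<theta> \<times> L x x' \<phi> \<times> L x x' \<phi>))"
  have "(\<Union>t. nuB_set E t \<times> nuB_set E t) \<subseteq> (\<Union>k\<in>K. B k)"
  proof clarify
    fix t x y z u v x' y' z' u' v'
    assume "(x, y, z, u, v) \<in> nuB_set E t" "(x', y', z', u', v') \<in> nuB_set E t"
    then obtain \<theta> \<phi> where "\<theta> \<in> orth_group" "\<phi> \<in> orth_group"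
      and "(y, y') \<in> L x x' \<theta>" "(z, z') \<in> L x x' \<theta>" "(u, u') \<in> L x x' \<phi>" "(v, v') \<in> L x x' \<phi>"
      unfolding L_def using nuB_set_pair_in_lam_sets[OF minus_one_not_square] by meson
    then show "((x, y, z, u, v), (x', y', z', u', v')) \<in> (\<Union>k\<in>K. B k)"
      unfolding K_def B_def by (intro UN_I[of "(x, x', \<theta>, \<phi>)"]) force+
  qed
  moreover have "card (B k) \<le>
      (case k of (x, x', \<theta>, \<phi>) \<Rightarrow> card (L x x' \<theta>) ^ 2 * card (L x x' \<phi>) ^ 2)" for k
  proof -
    obtain x x' \<theta> \<phi> where k: "k = (x, x', \<theta>, \<phi>)" by (cases k)
    have "card (B k) \<le> card (L x x' \<theta> \<times> L x x' \<theta> \<times> L x x' \<phi> \<times> L x x' \<phi>)"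
      unfolding B_def k prod.case by (rule card_image_le) simp
    then show ?thesis by (simp add: k card_cartesian_product power2_eq_square)
  qed
  ultimately have "card (\<Union>t. nuB_set E t \<times> nuB_set E t) \<le>
      (\<Sum>(x, x', \<theta>, \<phi>)\<in>K. card (L x x' \<theta>) ^ 2 * card (L x x' \<phi>) ^ 2)"
    using card_UN_le[of K B] card_mono[of "\<Union>k\<in>K. B k"] sum_mono[of K "\<lambda>k. card (B k)"]
    by (simp add: K_def) (meson order.trans)
  also have "\<dots> = Psi E 2 2"
    by (simp add: Psi_def K_def L_def lam_eq_card_lam_set sum.cartesian_product)
  finally show ?thesis by (simp add: sum_nuB_sq_eq_card)
qed

theorem lemma3p1:
  fixes E :: "('a::{finite,field} ^ 2) set"
    and p n :: nat
  assumes "prime p" and "p mod 4 = 3" and "odd n"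
    and "CARD('a) = p ^ n"
  shows "(\<Sum>t\<in>(UNIV :: ('a ^ 6) set). (nuB E t)^2) \<le> Psi E 2 2"
  using assms(2-4) by (intro sum_nuB_sq_le_Psi minus_one_not_square) (simp add: power_mod_4_eq_3)

end
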